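(* Let $\zeta(n,k)$ be a binary linear code of length $n$ and dimension $k$ with parity-check matrix $H$, and let $s,p\in\mathbb{N}$ with $0\le s\le k$, $0\le p\le n$, $s+p\le n$. Let $X$ be a random binary string of length $n-p-s$ and let $Z$ (the eavesdropper's information) be a discrete random variable jointly distributed with $X$. In the $sp$-protocol, let $R_p$ and $R_s$ be uniformly random binary strings of lengths $p$ and $s$, independent of each other and of $(X,Z)$; let $g$ be a fixed permutation of the $n$ coordinate positions, and set $\hat X = g(X\,|\,R_p\,|\,R_s)$ (concatenation followed by the permutation). The public communication is $C = (H\hat X^T, R_s)$, of length $|C| = n-k+s$. Let $R = \frac{k-s}{n-s-p}$ be the rate of the code obtained from $\zeta(n,k)$ by puncturing $p$ and shortening $s$ symbols, and let $|X| = n-p-s$. Then for any security constant $t\ge 0$, with probability at least $1-2^{-t}$ over the realization $(z,c)$ of $(Z,C)$, $$H_\infty(\hat X\mid Z=z, C=c) \ge H_\infty(X\mid Z) - |X|(1-R) - t.$$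
   Context: Min-entropy: $H_\infty(X) = -\log\max_x P_X(x)$; conditional min-entropy $H_\infty(X\mid Z) = \min_z H_\infty(X\mid Z=z)$ with $H_\infty(X\mid Z=z) = -\log\max_x P_{X\mid Z}(x\mid z)$, minimum over $z$ with positive probability. The syndrome of a length-$n$ binary vector $v$ is $Hv^T$. The paper writes the conclusion as "$H_\infty(\hat X\mid ZC)\ge H_\infty(X\mid Z)-|X|(1-R)-t$ with probability $1-2^{-t}$", meaning the bound holds for the realized values of the eavesdropper's information and the public communication except with probability at most $2^{-t}$. *)

theory Defs
  imports "HOL-Probability.Probability" "HOL-Combinatorics.Permutations"
begin

text \<open>Binary vectors are bool lists (True = 1). Inner product over GF(2).\<close>
definition gf2_inner :: "bool list \<Rightarrow> bool list \<Rightarrow> bool" where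
  "gf2_inner u v = odd (card {i. i < length u \<and> i < length v \<and> u ! i \<and> v ! i})"

text \<open>Syndrome H v^T, H given as the list of its rows.\<close>
definition syndrome :: "bool list list \<Rightarrow> bool list \<Rightarrow> bool list" where
  "syndrome H v = map (\<lambda>row. gf2_inner row v) H"

definition code_of :: "bool list list \<Rightarrow> nat \<Rightarrow> bool list set" where
  "code_of H n = {v. length v = n \<and> syndrome H v = replicate (length H) False}"

text \<open>H is an (n-k) x n parity-check matrix of a binary linear code zeta(n,k) of
  length n and dimension k (a k-dimensional GF(2)-subspace has 2^k elements).\<close>
definition parity_check_matrix :: "bool list list \<Rightarrow> nat \<Rightarrow> nat \<Rightarrow> bool" where
  "parity_check_matrix H n k \<longleftrightarrow> k \<le> n \<and> length H = n - k \<and>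
     (\<forall>row \<in> set H. length row = n) \<and> card (code_of H n) = 2 ^ k"

definition apply_perm :: "(nat \<Rightarrow> nat) \<Rightarrow> bool list \<Rightarrow> bool list" where
  "apply_perm g v = map (\<lambda>i. v ! g i) [0..<length v]"

definition uniform_bits :: "nat \<Rightarrow> bool list pmf" where
  "uniform_bits l = pmf_of_set {r. length r = l}"

definition marg2 :: "('a \<times> 'b) pmf \<Rightarrow> 'b \<Rightarrow> real" where
  "marg2 M b = measure_pmf.prob M {q. snd q = b}"

definition min_entropy_given :: "('a \<times> 'b) pmf \<Rightarrow> 'b \<Rightarrow> real" where
  "min_entropy_given M b = - log 2 (SUP a. pmf M (a, b) / marg2 M b)"

definition cond_min_entropy :: "('a \<times> 'b) pmf \<Rightarrow> real" where
  "cond_min_entropy M = (INF b \<in> {b. marg2 M b > 0}. min_entropy_given M b)"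

definition sp_protocol :: "bool list list \<Rightarrow> (nat \<Rightarrow> nat) \<Rightarrow> nat \<Rightarrow> nat \<Rightarrow>
    (bool list \<times> 'z) pmf \<Rightarrow> (bool list \<times> ('z \<times> (bool list \<times> bool list))) pmf" where
  "sp_protocol H g p s M =
     do { (x, z) \<leftarrow> M; rp \<leftarrow> uniform_bits p; rs \<leftarrow> uniform_bits s;
          let xh = apply_perm g (x @ rp @ rs);
          return_pmf (xh, (z, (syndrome H xh, rs))) }"

end

theory Submission imports Defs begin

text \<open>The transcript \<open>(Xhat, Z, C)\<close> is an injective image of \<open>(X, Z, R_p, R_s)\<close>, so each of
  its values has probability at most \<open>2 powr -(p + s) * 2 powr -H * P_Z(z)\<close>, where \<open>H\<close> is the
  conditional min-entropy of \<open>X\<close> given \<open>Z\<close>. The public message \<open>C\<close> takes at most \<open>2 ^ m\<close> values,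
  \<open>m = n - k + s\<close>, so by a union bound over them the observed \<open>(z, c)\<close> satisfies
  \<open>P_ZC(z, c) \<ge> \<delta> * P_Z(z)\<close> except with probability \<open>2 ^ m * \<delta>\<close>. For such \<open>(z, c)\<close> every
  conditional probability of \<open>Xhat\<close> is at most \<open>2 powr -(p + s) * 2 powr -H / \<delta>\<close>. Taking
  \<open>\<delta> = 2 powr -(m + t)\<close> gives the bound, because \<open>m - p - s \<le> |X| (1 - R)\<close>.\<close>

(* Both Infinite_Sum and Infinite_Set_Sum declare abs_summable_on; the proofs use the latter. *)
no_notation Infinite_Sum.abs_summable_on (infixr \<open>abs'_summable'_on\<close> 46)

definition guessing_prob :: "('a \<times> 'b) pmf \<Rightarrow> 'b \<Rightarrow> real" where
  "guessing_prob M b = (SUP a. pmf M (a, b) / marg2 M b)"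

lemma min_entropy_given_eq: "min_entropy_given M b = - log 2 (guessing_prob M b)"
  by (simp add: min_entropy_given_def guessing_prob_def)

lemma marg2_eq_pmf_map_snd: "marg2 M b = pmf (map_pmf snd M) b"
  by (simp add: marg2_def pmf_map vimage_def)

lemma marg2_nonneg: "0 \<le> marg2 M b"
  by (simp add: marg2_def)

lemma pmf_le_marg2: "pmf M (a, b) \<le> marg2 M b"
  unfolding marg2_def measure_pmf_single[symmetric]
  by (rule measure_pmf.finite_measure_mono) auto

lemma marg2_pos_iff: "0 < marg2 M b \<longleftrightarrow> (\<exists>a. (a, b) \<in> set_pmf M)"
proof -
  have "0 < marg2 M b \<longleftrightarrow> marg2 M b \<noteq> 0" using marg2_nonneg[of M b] by linarith
  also have "\<dots> \<longleftrightarrow> set_pmf M \<inter> {q. snd q = b} \<noteq> {}"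
    unfolding marg2_def measure_pmf_zero_iff ..
  also have "\<dots> \<longleftrightarrow> (\<exists>a. (a, b) \<in> set_pmf M)"
    by (auto simp: ex_in_conv[symmetric])
  finally show ?thesis .
qed

lemma cond_prob_le_1: "pmf M (a, b) / marg2 M b \<le> 1"
  using pmf_le_marg2[of M a b] marg2_nonneg[of M b]
  by (cases "marg2 M b = 0") (simp_all add: divide_le_eq)

lemma bdd_above_cond_prob: "bdd_above (range (\<lambda>a. pmf M (a, b) / marg2 M b))"
  using cond_prob_le_1 by (auto intro!: bdd_aboveI)

lemma guessing_prob_le_1: "guessing_prob M b \<le> 1"
  unfolding guessing_prob_def by (rule cSUP_least) (auto simp: cond_prob_le_1)

lemma pmf_le_guessing_prob: "pmf M (a, b) \<le> guessing_prob M b * marg2 M b"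
proof (cases "marg2 M b = 0")
  case True
  then show ?thesis using pmf_le_marg2[of M a b] by simp
next
  case False
  have "pmf M (a, b) / marg2 M b \<le> guessing_prob M b"
    unfolding guessing_prob_def by (rule cSUP_upper[OF _ bdd_above_cond_prob]) simp
  then show ?thesis using False marg2_nonneg[of M b] by (simp add: divide_le_eq)
qed

lemma guessing_prob_pos:
  assumes "0 < marg2 M b"
  shows "0 < guessing_prob M b"
proof -
  obtain a where "(a, b) \<in> set_pmf M" using assms[unfolded marg2_pos_iff] ..
  then have "0 < pmf M (a, b) / marg2 M b" using assms by (simp add: pmf_positive)
  also have "\<dots> \<le> guessing_prob M b"
    unfolding guessing_prob_def by (rule cSUP_upper[OF _ bdd_above_cond_prob]) simp
  finally show ?thesis .
qed

lemma guessing_prob_le: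
  assumes "0 < marg2 M b" and "\<And>a. pmf M (a, b) \<le> r * marg2 M b"
  shows "guessing_prob M b \<le> r"
  unfolding guessing_prob_def using assms by (intro cSUP_least) (simp_all add: divide_le_eq)

lemma min_entropy_given_ge:
  assumes "0 < marg2 M b" and "\<And>a. pmf M (a, b) \<le> r * marg2 M b"
  shows "- log 2 r \<le> min_entropy_given M b"
  unfolding min_entropy_given_eq
  using guessing_prob_pos[OF assms(1)] guessing_prob_le[OF assms] by simp

lemma min_entropy_given_nonneg:
  assumes "0 < marg2 M b"
  shows "0 \<le> min_entropy_given M b"
  unfolding min_entropy_given_eq using guessing_prob_pos[OF assms] guessing_prob_le_1[of M b]
  by simp

lemma cond_min_entropy_le:
  assumes "0 < marg2 M b"
  shows "cond_min_entropy M \<le> min_entropy_given M b"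
  unfolding cond_min_entropy_def using assms min_entropy_given_nonneg
  by (intro cINF_lower) (auto intro!: bdd_belowI[where m = 0])

lemma pmf_le_cond_min_entropy: "pmf M (x, z) \<le> 2 powr (- cond_min_entropy M) * marg2 M z"
proof (cases "marg2 M z = 0")
  case True
  then show ?thesis using pmf_le_marg2[of M x z] by simp
next
  case False
  then have pos: "0 < marg2 M z" using marg2_nonneg[of M z] by simp
  have "guessing_prob M z = 2 powr (- min_entropy_given M z)"
    using guessing_prob_pos[OF pos] by (simp add: min_entropy_given_eq)
  also have "\<dots> \<le> 2 powr (- cond_min_entropy M)"
    using cond_min_entropy_le[OF pos] by simp
  finally show ?thesis
    using pmf_le_guessing_prob[of M x z] marg2_nonneg[of M z]
    by (meson mult_right_mono order_trans)
qed

lemma prob_atypical_fibre_le: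
  fixes Q :: "('z \<times> 'c) pmf" and \<delta> :: real
  assumes "0 \<le> \<delta>"
  shows "measure_pmf.prob Q {zc. snd zc = c \<and> pmf Q zc < \<delta> * pmf (map_pmf fst Q) (fst zc)} \<le> \<delta>"
proof -
  define B where "B = {z. pmf Q (z, c) < \<delta> * pmf (map_pmf fst Q) z}"
  have eq: "{zc. snd zc = c \<and> pmf Q zc < \<delta> * pmf (map_pmf fst Q) (fst zc)} = (\<lambda>z. (z, c)) ` B"
    by (auto simp: B_def)
  have inj: "inj_on (\<lambda>z. (z, c)) B" by (auto simp: inj_on_def)
  have "measure_pmf.prob Q ((\<lambda>z. (z, c)) ` B) = infsetsum (\<lambda>z. pmf Q (z, c)) B"
    by (simp add: measure_pmf_conv_infsetsum infsetsum_reindex[OF inj])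
  also have "\<dots> \<le> infsetsum (\<lambda>z. \<delta> * pmf (map_pmf fst Q) z) B"
  proof (rule infsetsum_mono)
    show "(\<lambda>z. pmf Q (z, c)) abs_summable_on B"
      using abs_summable_on_reindex_iff[OF inj, of "pmf Q"] pmf_abs_summable by auto
    show "(\<lambda>z. \<delta> * pmf (map_pmf fst Q) z) abs_summable_on B"
      by (intro abs_summable_on_cmult_right pmf_abs_summable)
  qed (auto simp: B_def)
  also have "\<dots> = \<delta> * measure_pmf.prob (map_pmf fst Q) B"
    by (simp add: measure_pmf_conv_infsetsum infsetsum_cmult_right pmf_abs_summable)
  also have "\<dots> \<le> \<delta>" using assms by (simp add: mult_left_le)
  finally show ?thesis by (simp add: eq)
qed

lemma prob_atypical_le:
  fixes Q :: "('z \<times> 'c) pmf" and \<delta> :: real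
  assumes "finite C" and "\<And>zc. zc \<in> set_pmf Q \<Longrightarrow> snd zc \<in> C" and "0 \<le> \<delta>"
  shows "measure_pmf.prob Q {zc. pmf Q zc < \<delta> * pmf (map_pmf fst Q) (fst zc)} \<le> card C * \<delta>"
proof -
  let ?A = "\<lambda>c. {zc. snd zc = c \<and> pmf Q zc < \<delta> * pmf (map_pmf fst Q) (fst zc)}"
  have "measure_pmf.prob Q {zc. pmf Q zc < \<delta> * pmf (map_pmf fst Q) (fst zc)}
      = measure_pmf.prob Q ({zc. pmf Q zc < \<delta> * pmf (map_pmf fst Q) (fst zc)} \<inter> set_pmf Q)"
    by (simp add: measure_Int_set_pmf)
  also have "\<dots> \<le> measure_pmf.prob Q (\<Union>c\<in>C. ?A c)"
    using assms(2) by (intro measure_pmf.finite_measure_mono) auto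
  also have "\<dots> \<le> (\<Sum>c\<in>C. measure_pmf.prob Q (?A c))"
    by (rule measure_pmf.finite_measure_subadditive_finite[OF assms(1)]) auto
  also have "\<dots> \<le> (\<Sum>c\<in>C. \<delta>)"
    by (intro sum_mono prob_atypical_fibre_le assms(3))
  finally show ?thesis by simp
qed

lemma prob_min_entropy_given_ge:
  fixes P :: "('a \<times> ('z \<times> 'c)) pmf" and K \<delta> :: real
  assumes "finite C" and "\<And>q. q \<in> set_pmf P \<Longrightarrow> snd (snd q) \<in> C"
    and "\<And>a z c. pmf P (a, (z, c)) \<le> K * pmf (map_pmf (fst \<circ> snd) P) z"
    and "0 \<le> K" and "0 < \<delta>"
  shows "1 - card C * \<delta> \<le> measure_pmf.prob P {q. - log 2 (K / \<delta>) \<le> min_entropy_given P (snd q)}"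
proof -
  define Q where "Q = map_pmf snd P"
  define Atyp where "Atyp = {zc. pmf Q zc < \<delta> * pmf (map_pmf fst Q) (fst zc)}"
  have marg2_P: "marg2 P zc = pmf Q zc" for zc
    by (simp add: Q_def marg2_eq_pmf_map_snd)
  have Z_marg: "map_pmf fst Q = map_pmf (fst \<circ> snd) P"
    by (simp add: Q_def pmf.map_comp)
  have "measure_pmf.prob Q Atyp \<le> card C * \<delta>"
    unfolding Atyp_def using assms(1,2,5) by (intro prob_atypical_le) (auto simp: Q_def)
  then have "1 - card C * \<delta> \<le> measure_pmf.prob P {q. snd q \<notin> Atyp}"
    using measure_pmf.prob_compl[of "{q. snd q \<in> Atyp}" P]
    by (simp add: Q_def vimage_def Compl_eq_Diff_UNIV[symmetric] Collect_neg_eq)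
  also have "\<dots> = measure_pmf.prob P ({q. snd q \<notin> Atyp} \<inter> set_pmf P)"
    by (simp add: measure_Int_set_pmf)
  also have "\<dots> \<le> measure_pmf.prob P {q. - log 2 (K / \<delta>) \<le> min_entropy_given P (snd q)}"
  proof (intro measure_pmf.finite_measure_mono subsetI)
    fix q assume "q \<in> {q. snd q \<notin> Atyp} \<inter> set_pmf P"
    moreover obtain xh z c where q: "q = (xh, (z, c))" by (metis prod.collapse)
    ultimately have typical: "(z, c) \<notin> Atyp" and pos: "0 < marg2 P (z, c)"
      by (auto simp: marg2_pos_iff)
    have "pmf P (a, (z, c)) \<le> K / \<delta> * marg2 P (z, c)" for a
    proof -
      have "pmf P (a, (z, c)) \<le> K * pmf (map_pmf fst Q) z" by (simp add: Z_marg assms(3))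
      also have "\<dots> \<le> K * (marg2 P (z, c) / \<delta>)"
        using typical assms(4,5) by (intro mult_left_mono) (simp_all add: Atyp_def marg2_P field_simps)
      finally show ?thesis by simp
    qed
    then show "q \<in> {q. - log 2 (K / \<delta>) \<le> min_entropy_given P (snd q)}"
      using min_entropy_given_ge[OF pos] by (simp add: q)
  qed simp
  finally show ?thesis .
qed

lemma finite_bit_strings: "finite {r :: bool list. length r = l}"
  using finite_lists_length_eq[of "UNIV :: bool set" l] by simp

lemma card_bit_strings: "card {r :: bool list. length r = l} = 2 ^ l"
  using card_lists_length_eq[of "UNIV :: bool set" l] by simp

lemma bit_strings_nonempty: "{r :: bool list. length r = l} \<noteq> {}"
  by (auto intro: exI[of _ "replicate l False"])

lemma set_pmf_uniform_bits: "set_pmf (uniform_bits l) = {r. length r = l}"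
  unfolding uniform_bits_def using finite_bit_strings bit_strings_nonempty by simp

lemma pmf_uniform_bits_le: "pmf (uniform_bits l) r \<le> 1 / 2 ^ l"
  unfolding uniform_bits_def
  using finite_bit_strings bit_strings_nonempty card_bit_strings
  by (simp add: indicator_def)

lemma length_apply_perm [simp]: "length (apply_perm g v) = length v"
  by (simp add: apply_perm_def)

lemma length_syndrome [simp]: "length (syndrome H v) = length H"
  by (simp add: syndrome_def)

lemma apply_perm_inject:
  assumes g: "g permutes {..<n}" and "length v = n" "length w = n"
    and eq: "apply_perm g v = apply_perm g w"
  shows "v = w"
proof (rule nth_equalityI)
  show "length v = length w" using assms by simp
  fix j assume "j < length v"
  then have "j \<in> g ` {..<n}" using permutes_image[OF g] assms by simp
  then obtain i where i: "i < n" "j = g i" by auto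
  have "apply_perm g v ! i = v ! g i" "apply_perm g w ! i = w ! g i"
    using i assms by (simp_all add: apply_perm_def)
  then show "v ! j = w ! j" using eq i by simp
qed

definition sp_outcome :: "bool list list \<Rightarrow> (nat \<Rightarrow> nat) \<Rightarrow>
    (bool list \<times> 'z) \<times> (bool list \<times> bool list) \<Rightarrow> bool list \<times> ('z \<times> (bool list \<times> bool list))" where
  "sp_outcome H g = (\<lambda>((x, z), (rp, rs)).
     (apply_perm g (x @ rp @ rs), (z, (syndrome H (apply_perm g (x @ rp @ rs)), rs))))"

lemma sp_protocol_eq_map_pmf:
  "sp_protocol H g p s M
     = map_pmf (sp_outcome H g) (pair_pmf M (pair_pmf (uniform_bits p) (uniform_bits s)))"
  unfolding sp_protocol_def sp_outcome_def pair_pmf_def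
  by (simp add: map_bind_pmf bind_assoc_pmf bind_return_pmf Let_def split_beta')

lemma inj_on_sp_outcome:
  assumes "g permutes {..<l + p + s}"
  shows "inj_on (sp_outcome H g) {((x, z), (rp, rs)). length x = l \<and> length rp = p \<and> length rs = s}"
proof (rule inj_onI)
  fix u v
  assume u: "u \<in> {((x, z), (rp, rs)). length x = l \<and> length rp = p \<and> length rs = s}"
    and v: "v \<in> {((x, z), (rp, rs)). length x = l \<and> length rp = p \<and> length rs = s}"
    and eq: "sp_outcome H g u = sp_outcome H g v"
  obtain x z rp rs where u_eq: "u = ((x, z), (rp, rs))" by (metis prod.collapse)
  obtain x' z' rp' rs' where v_eq: "v = ((x', z'), (rp', rs'))" by (metis prod.collapse)
  have len: "length x = l" "length rp = p" "length rs = s"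
    "length x' = l" "length rp' = p" "length rs' = s"
    using u v by (simp_all add: u_eq v_eq)
  from eq have same: "apply_perm g (x @ rp @ rs) = apply_perm g (x' @ rp' @ rs') \<and> z = z'"
    by (auto simp: sp_outcome_def u_eq v_eq)
  have "x @ rp @ rs = x' @ rp' @ rs'"
    by (rule apply_perm_inject[OF assms]) (use len same in simp_all)
  then show "u = v"
    using len same by (simp add: u_eq v_eq append_eq_append_conv)
qed

lemma pmf_sp_protocol_le:
  assumes "g permutes {..<l + p + s}" and "\<forall>xz \<in> set_pmf M. length (fst xz) = l"
  shows "pmf (sp_protocol H g p s M) (xh, (z, c))
           \<le> 2 powr (- real (p + s) - cond_min_entropy M) * marg2 M z"
proof -
  define D where "D = pair_pmf M (pair_pmf (uniform_bits p) (uniform_bits s))"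
  have "set_pmf D \<subseteq> {((x, z), (rp, rs)). length x = l \<and> length rp = p \<and> length rs = s}"
    using assms(2) by (auto simp: D_def set_pmf_uniform_bits)
  then have inj: "inj_on (sp_outcome H g) (set_pmf D)"
    by (rule inj_on_subset[OF inj_on_sp_outcome[OF assms(1)]])
  have pmf_D: "pmf D a \<le> 2 powr (- real (p + s) - cond_min_entropy M) * marg2 M (snd (fst a))" for a
  proof -
    obtain x z rp rs where a: "a = ((x, z), (rp, rs))" by (metis prod.collapse)
    have "pmf D a = pmf M (x, z) * (pmf (uniform_bits p) rp * pmf (uniform_bits s) rs)"
      by (simp add: D_def a pmf_pair)
    also have "\<dots> \<le> (2 powr (- cond_min_entropy M) * marg2 M z) * (1 / 2 ^ p * (1 / 2 ^ s))"
      by (intro mult_mono pmf_le_cond_min_entropy pmf_uniform_bits_le) (simp_all add: marg2_nonneg)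
    also have "\<dots> = 2 powr (- real (p + s) - cond_min_entropy M) * marg2 M z"
      by (simp add: powr_diff powr_minus powr_realpow power_add divide_inverse)
    finally show ?thesis by (simp add: a)
  qed
  show ?thesis
  proof (cases "(xh, (z, c)) \<in> sp_outcome H g ` set_pmf D")
    case True
    then obtain a where "a \<in> set_pmf D" and a: "(xh, (z, c)) = sp_outcome H g a" by blast
    then have "pmf (sp_protocol H g p s M) (xh, (z, c)) = pmf D a"
      using inj by (simp add: sp_protocol_eq_map_pmf D_def pmf_map_inj)
    moreover have "snd (fst a) = z"
      using a by (cases a) (auto simp: sp_outcome_def)
    ultimately show ?thesis using pmf_D[of a] by (simp only:)
  next
    case False
    then have "pmf (sp_protocol H g p s M) (xh, (z, c)) = 0"
      by (simp add: sp_protocol_eq_map_pmf D_def pmf_eq_0_set_pmf)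
    then show ?thesis by (simp add: marg2_nonneg)
  qed
qed

lemma sp_protocol_eavesdropper_marginal:
  "map_pmf (fst \<circ> snd) (sp_protocol H g p s M) = map_pmf snd M"
proof -
  let ?D = "pair_pmf M (pair_pmf (uniform_bits p) (uniform_bits s))"
  have "map_pmf (fst \<circ> snd) (sp_protocol H g p s M) = map_pmf (fst \<circ> snd \<circ> sp_outcome H g) ?D"
    by (simp only: sp_protocol_eq_map_pmf pmf.map_comp)
  also have "fst \<circ> snd \<circ> sp_outcome H g = snd \<circ> fst" by (auto simp: sp_outcome_def)
  also have "map_pmf (snd \<circ> fst) ?D = map_pmf snd (map_pmf fst ?D)" by (simp only: pmf.map_comp)
  also have "map_pmf fst ?D = M" by (rule map_fst_pair_pmf)
  finally show ?thesis .
qed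

lemma sp_protocol_public_message:
  "q \<in> set_pmf (sp_protocol H g p s M)
     \<Longrightarrow> snd (snd q) \<in> {sy. length sy = length H} \<times> {rs. length rs = s}"
  by (auto simp: sp_protocol_eq_map_pmf sp_outcome_def set_pmf_uniform_bits)

lemma shortened_punctured_redundancy_ge:
  assumes "s \<le> k" and "k \<le> n" and "s + p \<le> n"
  shows "real n - real k - real p \<le> real (n - p - s) * (1 - real (k - s) / real (n - s - p))"
proof (cases "n - s - p = 0")
  case True
  then show ?thesis using assms by simp
next
  case False
  then have "real (n - p - s) * (1 - real (k - s) / real (n - s - p)) = real (n - p - s) - real (k - s)"
    by (simp add: field_simps)
  then show ?thesis using assms by (simp add: of_nat_diff)
qed

lemma prob_min_entropy_given_sp_protocol_ge:
  assumes "parity_check_matrix H n k" and "s + p \<le> n"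
    and "\<forall>xz \<in> set_pmf M. length (fst xz) = n - p - s" and "g permutes {..<n}"
  defines "P \<equiv> sp_protocol H g p s M"
  shows "1 - 2 powr (- t) \<le> measure_pmf.prob P
           {q. real (p + s) + cond_min_entropy M - real (n - k + s) - t \<le> min_entropy_given P (snd q)}"
proof -
  have len_H: "length H = n - k"
    using assms(1) unfolding parity_check_matrix_def by blast
  define m where "m = n - k + s"
  define K where "K = 2 powr (- real (p + s) - cond_min_entropy M)"
  define \<delta> :: real where "\<delta> = 2 powr (- real m - t)"
  define C where "C = {sy :: bool list. length sy = length H} \<times> {rs :: bool list. length rs = s}"
  have "n - p - s + p + s = n" using assms(2) by arith
  then have g: "g permutes {..<n - p - s + p + s}" using assms(4) by (simp only:)
  have "pmf P (a, (z, c)) \<le> K * pmf (map_pmf (fst \<circ> snd) P) z" for a z c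
    unfolding P_def K_def sp_protocol_eavesdropper_marginal marg2_eq_pmf_map_snd[symmetric]
    by (rule pmf_sp_protocol_le[OF g assms(3)])
  moreover have "finite C" by (simp add: C_def finite_bit_strings)
  moreover have "snd (snd q) \<in> C" if "q \<in> set_pmf P" for q
    using sp_protocol_public_message[OF that[unfolded P_def]] by (simp add: C_def)
  moreover have "0 \<le> K" and "0 < \<delta>" by (simp_all add: K_def \<delta>_def)
  ultimately have "1 - card C * \<delta> \<le> measure_pmf.prob P
      {q. - log 2 (K / \<delta>) \<le> min_entropy_given P (snd q)}"
    using prob_min_entropy_given_ge[of C P K \<delta>] by blast
  moreover have "real (card C) = 2 ^ m"
    by (simp add: C_def card_cartesian_product card_bit_strings len_H m_def power_add)
  then have "card C * \<delta> = 2 powr (- t)"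
    by (simp add: \<delta>_def powr_realpow[symmetric] powr_add[symmetric])
  moreover have "K / \<delta> = 2 powr ((- real (p + s) - cond_min_entropy M) - (- real m - t))"
    by (simp only: K_def \<delta>_def powr_diff)
  then have "- log 2 (K / \<delta>) = real (p + s) + cond_min_entropy M - real m - t" by simp
  ultimately show ?thesis by (simp add: m_def)
qed

theorem theorem2:
  fixes H :: "bool list list" and n k s p :: nat and g :: "nat \<Rightarrow> nat"
    and M :: "(bool list \<times> 'z) pmf" and t :: real
  assumes "parity_check_matrix H n k"
    and "s \<le> k" and "p \<le> n" and "s + p \<le> n"
    and "\<forall>xz \<in> set_pmf M. length (fst xz) = n - p - s"
    and "g permutes {..<n}"
    and "t \<ge> 0"
  shows "measure_pmf.prob (sp_protocol H g p s M)
           {q. min_entropy_given (sp_protocol H g p s M) (snd q)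
                 \<ge> cond_min_entropy M
                    - real (n - p - s) * (1 - real (k - s) / real (n - s - p)) - t}
         \<ge> 1 - 2 powr (- t)"
proof -
  let ?B = "real (n - p - s) * (1 - real (k - s) / real (n - s - p))"
  let ?P = "sp_protocol H g p s M"
  have "k \<le> n" using assms(1) unfolding parity_check_matrix_def by blast
  then have "real (n - k + s) - real (p + s) \<le> ?B"
    using shortened_punctured_redundancy_ge[OF assms(2) \<open>k \<le> n\<close> assms(4)] by (simp add: of_nat_diff)
  then have "{q. real (p + s) + cond_min_entropy M - real (n - k + s) - t \<le> min_entropy_given ?P (snd q)}
      \<subseteq> {q. cond_min_entropy M - ?B - t \<le> min_entropy_given ?P (snd q)}"
    by auto
  then have "measure_pmf.prob ?P
        {q. real (p + s) + cond_min_entropy M - real (n - k + s) - t \<le> min_entropy_given ?P (snd q)}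
      \<le> measure_pmf.prob ?P {q. cond_min_entropy M - ?B - t \<le> min_entropy_given ?P (snd q)}"
    by (rule measure_pmf.finite_measure_mono) simp
  moreover have "1 - 2 powr (- t) \<le> measure_pmf.prob ?P
      {q. real (p + s) + cond_min_entropy M - real (n - k + s) - t \<le> min_entropy_given ?P (snd q)}"
    using prob_min_entropy_given_sp_protocol_ge[OF assms(1,4,5,6)] .
  ultimately show ?thesis by linarith
qed

end
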